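(* Let $(\Gamma,g)$ be a vertex-weighted metric graph of genus $g(\Gamma)$, and let $F$ be a tropical meromorphic function on $\Gamma$ with $\operatorname{div}(F)+K_\Gamma\geq0$. Then for every $x\in\Gamma$ and every tangent direction $v$ at $x$, $|d_vF(x)|\leq2g(\Gamma)-1$. If $K_\Gamma$ is effective (i.e. $\Gamma$ has no genus-zero leaves), then $|d_vF(x)|\leq2g(\Gamma)-2$.
   Context: A vertex-weighted metric graph is a compact connected metric graph with finite vertex set and weights $g(x)\in\mathbb{Z}_{\geq0}$ on vertices; non-vertices have weight $0$ and valency $\deg(x)=2$. Genus: $g(\Gamma)=h_1(\Gamma)+\sum_xg(x)$. Canonical divisor: $K_\Gamma=\sum_x(2g(x)-2+\deg(x))(x)$. A genus-zero leaf is a vertex of weight $0$ and valency $1$. A tropical meromorphic function is a continuous piecewise affine function $\Gamma\to\mathbb{R}$ with integer slopes; $d_vF(x)$ is the slope of $F$ at $x$ in direction $v$, and $\operatorname{div}(F)=\sum_x\operatorname{ord}_x(F)(x)$ with $\operatorname{ord}_x(F)=-\sum_vd_vF(x)$, the sum over tangent directions at $x$. *)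

theory Defs
  imports "HOL-Analysis.Analysis"
begin

(* A vertex-weighted metric graph, given by a finite model: finite vertex set,
   finite edge set (loops and multi-edges allowed), each edge e is a segment
   [0, len e] glued at 0 to src e and at len e to tgt e; wt is the vertex weight. *)
record ('v, 'e) wmgraph =
  verts :: "'v set"
  edges :: "'e set"
  src   :: "'e \<Rightarrow> 'v"
  tgt   :: "'e \<Rightarrow> 'v"
  len   :: "'e \<Rightarrow> real"
  wt    :: "'v \<Rightarrow> nat"

definition adj :: "('v, 'e) wmgraph \<Rightarrow> 'v \<Rightarrow> 'v \<Rightarrow> bool" where
  "adj G a b \<longleftrightarrow> (\<exists>e\<in>edges G. (src G e = a \<and> tgt G e = b) \<or> (src G e = b \<and> tgt G e = a))"

definition metric_graph :: "('v, 'e) wmgraph \<Rightarrow> bool" where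
  "metric_graph G \<longleftrightarrow>
     finite (verts G) \<and> verts G \<noteq> {} \<and> finite (edges G) \<and>
     (\<forall>e\<in>edges G. src G e \<in> verts G \<and> tgt G e \<in> verts G \<and> len G e > 0) \<and>
     (\<forall>a\<in>verts G. \<forall>b\<in>verts G. (adj G)\<^sup>*\<^sup>* a b)"

datatype ('v, 'e) point = Vert 'v | EPt 'e real

definition points :: "('v, 'e) wmgraph \<Rightarrow> ('v, 'e) point set" where
  "points G = Vert ` verts G \<union> {EPt e t | e t. e \<in> edges G \<and> 0 < t \<and> t < len G e}"

definition on_edge :: "('v, 'e) wmgraph \<Rightarrow> (('v, 'e) point \<Rightarrow> real) \<Rightarrow> 'e \<Rightarrow> real \<Rightarrow> real" where
  "on_edge G F e t = (if t = 0 then F (Vert (src G e))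
                      else if t = len G e then F (Vert (tgt G e)) else F (EPt e t))"

definition pw_affine_int :: "real \<Rightarrow> (real \<Rightarrow> real) \<Rightarrow> bool" where
  "pw_affine_int L f \<longleftrightarrow>
     (\<exists>(n::nat) (a::nat \<Rightarrow> real). a 0 = 0 \<and> a n = L \<and> (\<forall>i<n. a i < a (Suc i)) \<and>
        (\<forall>i<n. \<exists>(m::int) (c::real). \<forall>t\<in>{a i..a (Suc i)}. f t = of_int m * t + c))"

definition trop_mero :: "('v, 'e) wmgraph \<Rightarrow> (('v, 'e) point \<Rightarrow> real) \<Rightarrow> bool" where
  "trop_mero G F \<longleftrightarrow> (\<forall>e\<in>edges G. pw_affine_int (len G e) (on_edge G F e))"

definition rslope :: "(real \<Rightarrow> real) \<Rightarrow> real \<Rightarrow> real" where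
  "rslope f t = (THE m. \<exists>\<epsilon>>0. \<forall>s\<in>{t..t+\<epsilon>}. f s = f t + m * (s - t))"

definition lslope :: "(real \<Rightarrow> real) \<Rightarrow> real \<Rightarrow> real" where
  "lslope f t = (THE m. \<exists>\<epsilon>>0. \<forall>s\<in>{t-\<epsilon>..t}. f s = f t + m * (s - t))"

(* tangent directions: (e, True) = along e in increasing parameter,
   (e, False) = along e in decreasing parameter *)
definition tdirs :: "('v, 'e) wmgraph \<Rightarrow> ('v, 'e) point \<Rightarrow> ('e \<times> bool) set" where
  "tdirs G x = (case x of
      Vert v \<Rightarrow> {(e, True) | e. e \<in> edges G \<and> src G e = v}
               \<union> {(e, False) | e. e \<in> edges G \<and> tgt G e = v}
    | EPt e t \<Rightarrow> {(e, True), (e, False)})"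

definition param :: "('v, 'e) wmgraph \<Rightarrow> ('v, 'e) point \<Rightarrow> 'e \<times> bool \<Rightarrow> real" where
  "param G x d = (case x of Vert v \<Rightarrow> (if snd d then 0 else len G (fst d)) | EPt e t \<Rightarrow> t)"

definition dslope :: "('v, 'e) wmgraph \<Rightarrow> (('v, 'e) point \<Rightarrow> real) \<Rightarrow> ('v, 'e) point \<Rightarrow> 'e \<times> bool \<Rightarrow> real" where
  "dslope G F x d = (if snd d then rslope (on_edge G F (fst d)) (param G x d)
                     else - lslope (on_edge G F (fst d)) (param G x d))"

(* valency (loops counted twice) *)
definition valency :: "('v, 'e) wmgraph \<Rightarrow> ('v, 'e) point \<Rightarrow> nat" where
  "valency G x = card (tdirs G x)"

definition ord :: "('v, 'e) wmgraph \<Rightarrow> (('v, 'e) point \<Rightarrow> real) \<Rightarrow> ('v, 'e) point \<Rightarrow> real" where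
  "ord G F x = - (\<Sum>d\<in>tdirs G x. dslope G F x d)"

definition weight :: "('v, 'e) wmgraph \<Rightarrow> ('v, 'e) point \<Rightarrow> nat" where
  "weight G x = (case x of Vert v \<Rightarrow> wt G v | EPt e t \<Rightarrow> 0)"

definition canon :: "('v, 'e) wmgraph \<Rightarrow> ('v, 'e) point \<Rightarrow> int" where
  "canon G x = 2 * int (weight G x) - 2 + int (valency G x)"

(* genus g(Gamma) = h_1(Gamma) + sum of weights; h_1 = |E| - |V| + 1 (connected) *)
definition genus :: "('v, 'e) wmgraph \<Rightarrow> int" where
  "genus G = int (card (edges G)) - int (card (verts G)) + 1 + int (\<Sum>v\<in>verts G. wt G v)"

end

theory Submission
  imports Defs
begin

text \<open>Refine the model of \<open>\<Gamma>\<close> at the break points of \<open>F\<close>: the genus does not change, \<open>F\<close> becomes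
  affine with an integer slope \<open>\<sigma>\<^sub>e\<close> along every edge, every \<open>d\<^sub>vF(x)\<close> is some \<open>\<plusminus>\<sigma>\<^sub>e\<close>, and
  \<open>div F + K\<close> becomes a divisor on the vertices. Fix an edge \<open>e\<close> with \<open>\<sigma>\<^sub>e \<noteq> 0\<close> and let \<open>B\<close> be the
  set of vertices where \<open>F\<close> is at most its value at the lower end of \<open>e\<close>. Summing the coefficients
  of \<open>div F + K\<close> over \<open>B\<close>, every other edge leaving \<open>B\<close> climbs and contributes \<open>1 - |\<sigma>| \<le> 0\<close>
  while \<open>e\<close> contributes \<open>1 - |\<sigma>\<^sub>e|\<close>, so \<open>|\<sigma>\<^sub>e| \<le> 2 (|E(B)| - |B| + w(B)) + 1\<close>.
  Connectivity gives an injection from the vertices outside \<open>B\<close> into the edges leaving \<open>B\<close>,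
  whence \<open>|E(B)| - |B| + w(B) \<le> g - 1\<close>. If \<open>K\<close> is effective, summing it over the complement
  of \<open>B\<close>, where \<open>e\<close> is counted only once, improves this by one.\<close>

definition darts :: "('v, 'e) wmgraph \<Rightarrow> 'v \<Rightarrow> ('e \<times> bool) set" where
  "darts G v = {(e, True) | e. e \<in> edges G \<and> src G e = v} \<union> {(e, False) | e. e \<in> edges G \<and> tgt G e = v}"

definition dart_slope :: "('e \<Rightarrow> int) \<Rightarrow> 'e \<times> bool \<Rightarrow> int" where
  "dart_slope \<sigma> d = (if snd d then \<sigma> (fst d) else - \<sigma> (fst d))"

lemma dart_slope_simps [simp]:
  "dart_slope \<sigma> (e, True) = \<sigma> e" "dart_slope \<sigma> (e, False) = - \<sigma> e"
  by (simp_all add: dart_slope_def)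

text \<open>For a function with slope \<open>\<sigma> e\<close> along each edge \<open>e\<close>, oriented from \<open>src G e\<close> to \<open>tgt G e\<close>,
  \<open>div_plus_canon G \<sigma> v\<close> is the coefficient of \<open>div F + K\<close> at \<open>v\<close>; for \<open>\<sigma> = 0\<close> it is that of \<open>K\<close>.\<close>

definition div_plus_canon :: "('v, 'e) wmgraph \<Rightarrow> ('e \<Rightarrow> int) \<Rightarrow> 'v \<Rightarrow> int" where
  "div_plus_canon G \<sigma> v = (\<Sum>d\<in>darts G v. 1 - dart_slope \<sigma> d) + 2 * int (wt G v) - 2"

definition inner_edges :: "('v, 'e) wmgraph \<Rightarrow> 'v set \<Rightarrow> 'e set" where
  "inner_edges G B = {e \<in> edges G. src G e \<in> B \<and> tgt G e \<in> B}"

lemma metric_graphD: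
  assumes "metric_graph G"
  shows "finite (verts G)" "finite (edges G)"
    and "e \<in> edges G \<Longrightarrow> src G e \<in> verts G" "e \<in> edges G \<Longrightarrow> tgt G e \<in> verts G"
    and "e \<in> edges G \<Longrightarrow> 0 < len G e"
    and "verts G \<noteq> {}" "v \<in> verts G \<Longrightarrow> w \<in> verts G \<Longrightarrow> (adj G)\<^sup>*\<^sup>* v w"
  using assms unfolding metric_graph_def by auto

lemma sum_darts:
  assumes "finite (edges G)"
  shows "(\<Sum>d\<in>darts G v. f d) =
    (\<Sum>e\<in>edges G. (if src G e = v then f (e, True) else 0) + (if tgt G e = v then f (e, False) else 0))"
proof -
  have darts: "darts G v = (\<lambda>e. (e, True)) ` {e\<in>edges G. src G e = v} \<union> (\<lambda>e. (e, False)) ` {e\<in>edges G. tgt G e = v}"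
    unfolding darts_def by auto
  have "(\<Sum>d\<in>darts G v. f d) = (\<Sum>d\<in>(\<lambda>e. (e, True)) ` {e\<in>edges G. src G e = v}. f d) + (\<Sum>d\<in>(\<lambda>e. (e, False)) ` {e\<in>edges G. tgt G e = v}. f d)"
    unfolding darts by (rule sum.union_disjoint) (use assms in auto)
  also have "\<dots> = (\<Sum>e\<in>{e\<in>edges G. src G e = v}. f (e, True)) + (\<Sum>e\<in>{e\<in>edges G. tgt G e = v}. f (e, False))"
    by (simp add: sum.reindex inj_on_def)
  finally show ?thesis
    using assms by (simp add: sum.inter_filter sum.distrib)
qed

lemma sum_sum_darts:
  assumes "finite (edges G)" "finite U"
  shows "(\<Sum>v\<in>U. \<Sum>d\<in>darts G v. f d) =
    (\<Sum>e\<in>edges G. (if src G e \<in> U then f (e, True) else 0) + (if tgt G e \<in> U then f (e, False) else 0))"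
  unfolding sum_darts[OF assms(1)] sum.swap[where A = U] using assms by (simp add: sum.distrib)

lemma sum_div_plus_canon:
  assumes "finite (edges G)" "finite U"
  shows "(\<Sum>v\<in>U. div_plus_canon G \<sigma> v) =
    (\<Sum>e\<in>edges G. (if src G e \<in> U then 1 - \<sigma> e else 0) + (if tgt G e \<in> U then 1 + \<sigma> e else 0))
    + (\<Sum>v\<in>U. 2 * int (wt G v) - 2)"
proof -
  have "(\<Sum>v\<in>U. div_plus_canon G \<sigma> v) = (\<Sum>v\<in>U. \<Sum>d\<in>darts G v. 1 - dart_slope \<sigma> d) + (\<Sum>v\<in>U. 2 * int (wt G v) - 2)"
    unfolding div_plus_canon_def add_diff_eq[symmetric] by (rule sum.distrib)
  also have "(\<Sum>v\<in>U. \<Sum>d\<in>darts G v. 1 - dart_slope \<sigma> d) =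
    (\<Sum>e\<in>edges G. (if src G e \<in> U then 1 - \<sigma> e else 0) + (if tgt G e \<in> U then 1 + \<sigma> e else 0))"
    unfolding sum_sum_darts[OF assms] by (simp cong: if_cong)
  finally show ?thesis .
qed

lemma sum_div_plus_canon_verts:
  assumes "metric_graph G"
  shows "(\<Sum>v\<in>verts G. div_plus_canon G \<sigma> v) = 2 * genus G - 2"
proof -
  have "(\<Sum>v\<in>verts G. div_plus_canon G \<sigma> v) = (\<Sum>e\<in>edges G. 2) + (\<Sum>v\<in>verts G. 2 * int (wt G v) - 2)"
    unfolding sum_div_plus_canon[OF metric_graphD(2,1)[OF assms]]
    by (auto simp: metric_graphD[OF assms] intro: sum.cong)
  then show ?thesis
    unfolding genus_def by (simp add: sum_subtractf sum_distrib_left)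
qed

lemma genus_ge_one:
  assumes "metric_graph G" "\<forall>v\<in>verts G. 0 \<le> div_plus_canon G \<sigma> v"
  shows "1 \<le> genus G"
proof -
  have "0 \<le> (\<Sum>v\<in>verts G. div_plus_canon G \<sigma> v)"
    using assms(2) by (simp add: sum_nonneg)
  then show ?thesis
    unfolding sum_div_plus_canon_verts[OF assms(1)] by simp
qed

lemma genus_split:
  assumes "metric_graph G" "B \<subseteq> verts G"
  shows "genus G =
    (int (card (inner_edges G B)) - int (card B) + (\<Sum>v\<in>B. int (wt G v)))
    + (int (card (edges G - inner_edges G B)) - int (card (verts G - B)) + (\<Sum>v\<in>verts G - B. int (wt G v))) + 1"
proof -
  note fin = metric_graphD(1,2)[OF assms(1)]
  have "inner_edges G B \<subseteq> edges G"
    unfolding inner_edges_def by auto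
  then have "card (edges G) = card (inner_edges G B) + card (edges G - inner_edges G B)"
    using fin by (simp add: card_Diff_subset card_mono finite_subset)
  moreover have "card (verts G) = card B + card (verts G - B)"
    using fin assms(2) by (simp add: card_Diff_subset card_mono finite_subset)
  moreover have "(\<Sum>v\<in>verts G. wt G v) = (\<Sum>v\<in>B. wt G v) + (\<Sum>v\<in>verts G - B. wt G v)"
    using sum.subset_diff[OF assms(2) fin(1), of "wt G"] by (simp add: add.commute)
  ultimately show ?thesis
    unfolding genus_def by simp
qed

lemma card_diff_le_card_edges_leaving:
  assumes G: "metric_graph G" and B: "B \<subseteq> verts G" "B \<noteq> {}"
  shows "card (verts G - B) \<le> card (edges G - inner_edges G B)"
proof -
  define dist where "dist x = (LEAST k. \<exists>b\<in>B. (adj G ^^ k) x b)" for x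
  obtain b0 where b0: "b0 \<in> B" using B by auto
  have reach: "\<exists>b\<in>B. (adj G ^^ dist x) x b" if "x \<in> verts G" for x
  proof -
    have "(adj G)\<^sup>*\<^sup>* x b0"
      using metric_graphD(7)[OF G] that b0 B by auto
    then have "\<exists>k. \<exists>b\<in>B. (adj G ^^ k) x b"
      using rtranclp_imp_relpowp b0 by metis
    then show ?thesis
      unfolding dist_def by (rule LeastI_ex)
  qed
  \<comment> \<open>map every vertex outside \<open>B\<close> to the first edge of a shortest path to \<open>B\<close>\<close>
  have descend: "\<exists>e\<in>edges G. \<exists>c. ((src G e = x \<and> tgt G e = c) \<or> (src G e = c \<and> tgt G e = x)) \<and> dist c < dist x"
    if x: "x \<in> verts G - B" for x
  proof -
    obtain b where b: "b \<in> B" "(adj G ^^ dist x) x b"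
      using reach x by blast
    have "dist x \<noteq> 0"
      using b x by (intro notI) auto
    then obtain k where k: "dist x = Suc k"
      using not0_implies_Suc by blast
    then obtain c where c: "adj G x c" "(adj G ^^ k) c b"
      using b relpowp_Suc_D2 by metis
    have "dist c \<le> k"
      unfolding dist_def using c b by (metis (mono_tags, lifting) Least_le)
    obtain e where e: "e \<in> edges G" "(src G e = x \<and> tgt G e = c) \<or> (src G e = c \<and> tgt G e = x)"
      using c(1) unfolding adj_def by blast
    show ?thesis
      using e \<open>dist c \<le> k\<close> k by (intro bexI[OF _ e(1)] exI[of _ c]) auto
  qed
  then obtain f where f: "\<forall>x\<in>verts G - B. f x \<in> edges G \<and>
      (\<exists>c. ((src G (f x) = x \<and> tgt G (f x) = c) \<or> (src G (f x) = c \<and> tgt G (f x) = x)) \<and> dist c < dist x)"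
    by metis
  have "inj_on f (verts G - B)"
  proof (rule inj_onI, rule ccontr)
    fix x y assume x: "x \<in> verts G - B" and y: "y \<in> verts G - B" and "f x = f y" "x \<noteq> y"
    then show False
      using f[rule_format, OF x] f[rule_format, OF y] by auto
  qed
  moreover have "f ` (verts G - B) \<subseteq> edges G - inner_edges G B"
  proof (rule image_subsetI)
    fix x assume x: "x \<in> verts G - B"
    then show "f x \<in> edges G - inner_edges G B"
      using f[rule_format, OF x] unfolding inner_edges_def by auto
  qed
  ultimately show ?thesis
    using card_inj_on_le metric_graphD(2)[OF G] by blast
qed

lemma card_diff_bound_by_canonical:
  assumes G: "metric_graph G" and e0: "e0 \<in> edges G" "src G e0 \<in> B \<longleftrightarrow> tgt G e0 \<notin> B"
    and K: "\<forall>v\<in>verts G - B. 0 \<le> div_plus_canon G (\<lambda>_. 0) v"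
  shows "int (card (verts G - B)) + 1 \<le> int (card (edges G - inner_edges G B)) + (\<Sum>v\<in>verts G - B. int (wt G v))"
proof -
  define A where "A = verts G - B"
  note fin = metric_graphD(1,2)[OF G]
  have "0 \<le> (\<Sum>v\<in>A. div_plus_canon G (\<lambda>_. 0) v)"
    unfolding A_def using K by (intro sum_nonneg) blast
  also have "\<dots> = (\<Sum>e\<in>edges G. (if src G e \<in> A then 1 else 0) + (if tgt G e \<in> A then 1 else 0)) + (\<Sum>v\<in>A. 2 * int (wt G v) - 2)"
    using fin by (simp add: sum_div_plus_canon A_def cong: if_cong)
  also have "(\<Sum>e\<in>edges G. (if src G e \<in> A then 1 else 0) + (if tgt G e \<in> A then 1 else 0))
      \<le> (\<Sum>e\<in>edges G. (if e \<in> inner_edges G B then 0 else 2) - (if e = e0 then 1 else 0 :: int))"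
  proof (rule sum_mono)
    fix e assume "e \<in> edges G"
    then show "(if src G e \<in> A then 1 else 0) + (if tgt G e \<in> A then 1 else 0)
        \<le> (if e \<in> inner_edges G B then 0 else 2) - (if e = e0 then 1 else 0 :: int)"
      using e0 metric_graphD(3,4)[OF G] unfolding A_def inner_edges_def by auto
  qed
  also have "\<dots> = (\<Sum>e\<in>edges G - inner_edges G B. 2) - 1"
    using fin e0(1) by (simp add: sum_subtractf sum.If_cases Diff_eq)
  also have "\<dots> = 2 * int (card (edges G - inner_edges G B)) - 1"
    by simp
  also have "(\<Sum>v\<in>A. 2 * int (wt G v) - 2) = 2 * (\<Sum>v\<in>A. int (wt G v)) - 2 * int (card A)"
    by (simp add: sum_subtractf sum_distrib_left)
  finally show ?thesis
    unfolding A_def by linarith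
qed

locale edge_affine =
  fixes G :: "('v, 'e) wmgraph" and \<phi> :: "'v \<Rightarrow> real" and \<sigma> :: "'e \<Rightarrow> int"
  assumes metric_graph: "metric_graph G"
    and slope_along_edge: "e \<in> edges G \<Longrightarrow> \<phi> (tgt G e) - \<phi> (src G e) = of_int (\<sigma> e) * len G e"
begin

lemma slope_pos_iff:
  assumes "e \<in> edges G"
  shows "0 < \<sigma> e \<longleftrightarrow> \<phi> (src G e) < \<phi> (tgt G e)"
proof -
  have "0 < \<sigma> e \<longleftrightarrow> 0 < of_int (\<sigma> e) * len G e"
    using metric_graphD(5)[OF metric_graph assms] by (simp add: zero_less_mult_iff)
  then show ?thesis
    using slope_along_edge[OF assms] by (metis diff_gt_0_iff_gt)
qed

lemma slope_neg_iff:
  assumes "e \<in> edges G"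
  shows "\<sigma> e < 0 \<longleftrightarrow> \<phi> (tgt G e) < \<phi> (src G e)"
proof -
  have "\<sigma> e < 0 \<longleftrightarrow> of_int (\<sigma> e) * len G e < 0"
    using metric_graphD(5)[OF metric_graph assms] by (simp add: mult_less_0_iff)
  then show ?thesis
    using slope_along_edge[OF assms] by (metis diff_less_0_iff_less)
qed

definition sublevel :: "'e \<Rightarrow> 'v set" where
  "sublevel e0 = {v \<in> verts G. \<phi> v \<le> min (\<phi> (src G e0)) (\<phi> (tgt G e0))}"

lemma sublevel_subset: "sublevel e0 \<subseteq> verts G"
  unfolding sublevel_def by auto

lemma sublevel_crossing:
  assumes "e0 \<in> edges G" "\<sigma> e0 \<noteq> 0"
  shows "src G e0 \<in> sublevel e0 \<longleftrightarrow> tgt G e0 \<notin> sublevel e0"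
  using assms slope_pos_iff[of e0] slope_neg_iff[of e0] metric_graphD(3,4)[OF metric_graph, of e0]
  unfolding sublevel_def by auto

lemma sublevel_nonempty: "e0 \<in> edges G \<Longrightarrow> sublevel e0 \<noteq> {}"
  using metric_graphD(3,4)[OF metric_graph, of e0] unfolding sublevel_def by (auto simp: min_def)

lemma slope_bound_sublevel:
  assumes e0: "e0 \<in> edges G" "\<sigma> e0 \<noteq> 0"
    and nonneg: "\<forall>v\<in>sublevel e0. 0 \<le> div_plus_canon G \<sigma> v"
  shows "\<bar>\<sigma> e0\<bar> \<le> 2 * (int (card (inner_edges G (sublevel e0))) - int (card (sublevel e0))
    + (\<Sum>v\<in>sublevel e0. int (wt G v))) + 1"
proof -
  define B where "B = sublevel e0"
  define contrib where "contrib e = (if src G e \<in> B then 1 - \<sigma> e else 0) + (if tgt G e \<in> B then 1 + \<sigma> e else 0)" for e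
  note fin = metric_graphD(1,2)[OF metric_graph]
  \<comment> \<open>an edge leaving the sublevel set climbs, so it contributes at most \<open>0\<close> at its lower end\<close>
  have contrib_le: "contrib e \<le> (if e \<in> inner_edges G B then 2 else 0) + (if e = e0 then 1 - \<bar>\<sigma> e0\<bar> else 0)"
    if e: "e \<in> edges G" for e
  proof -
    have up: "0 < \<sigma> e" if "src G e \<in> B" "tgt G e \<notin> B"
      using that e metric_graphD(4)[OF metric_graph] slope_pos_iff unfolding B_def sublevel_def by force
    have down: "\<sigma> e < 0" if "tgt G e \<in> B" "src G e \<notin> B"
      using that e metric_graphD(3)[OF metric_graph] slope_neg_iff unfolding B_def sublevel_def by force
    have cross: "src G e0 \<in> B \<longleftrightarrow> tgt G e0 \<notin> B"
      unfolding B_def using sublevel_crossing[OF e0] .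
    show ?thesis
    proof (cases "e = e0")
      case True
      then show ?thesis
        using up down cross e unfolding contrib_def inner_edges_def by (cases "src G e0 \<in> B") auto
    next
      case False
      then show ?thesis
        using up down e unfolding contrib_def inner_edges_def by (cases "src G e \<in> B"; cases "tgt G e \<in> B") auto
    qed
  qed
  have "0 \<le> (\<Sum>v\<in>B. div_plus_canon G \<sigma> v)"
    unfolding B_def using nonneg by (intro sum_nonneg) blast
  also have "\<dots> = (\<Sum>e\<in>edges G. contrib e) + (\<Sum>v\<in>B. 2 * int (wt G v) - 2)"
    unfolding contrib_def B_def by (rule sum_div_plus_canon[OF fin(2) finite_subset[OF sublevel_subset fin(1)]])
  finally have "0 \<le> (\<Sum>e\<in>edges G. contrib e) + (\<Sum>v\<in>B. 2 * int (wt G v) - 2)" .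
  moreover have "(\<Sum>e\<in>edges G. contrib e) \<le> (\<Sum>e\<in>edges G. (if e \<in> inner_edges G B then 2 else 0) + (if e = e0 then 1 - \<bar>\<sigma> e0\<bar> else 0))"
    using contrib_le by (rule sum_mono)
  moreover have "\<dots> = 2 * int (card (inner_edges G B)) + 1 - \<bar>\<sigma> e0\<bar>"
    using fin e0(1) by (simp add: sum.distrib sum.If_cases inner_edges_def Int_def)
  moreover have "(\<Sum>v\<in>B. 2 * int (wt G v) - 2) = 2 * (\<Sum>v\<in>B. int (wt G v)) - 2 * int (card B)"
    by (simp add: sum_subtractf sum_distrib_left)
  ultimately show ?thesis
    unfolding B_def by (smt (verit))
qed

theorem slope_bound:
  assumes e0: "e0 \<in> edges G" and nonneg: "\<forall>v\<in>verts G. 0 \<le> div_plus_canon G \<sigma> v"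
  shows "\<bar>\<sigma> e0\<bar> \<le> 2 * genus G - 1"
proof (cases "\<sigma> e0 = 0")
  case True
  then show ?thesis using genus_ge_one[OF metric_graph nonneg] by simp
next
  case False
  let ?B = "sublevel e0"
  have "\<bar>\<sigma> e0\<bar> \<le> 2 * (int (card (inner_edges G ?B)) - int (card ?B) + (\<Sum>v\<in>?B. int (wt G v))) + 1"
    using slope_bound_sublevel[OF e0 False] nonneg sublevel_subset by blast
  moreover have "int (card (verts G - ?B)) \<le> int (card (edges G - inner_edges G ?B))"
    using card_diff_le_card_edges_leaving[OF metric_graph sublevel_subset sublevel_nonempty[OF e0]] by simp
  moreover have "0 \<le> (\<Sum>v\<in>verts G - ?B. int (wt G v))"
    by (simp add: sum_nonneg)
  ultimately show ?thesis
    using genus_split[OF metric_graph sublevel_subset, of e0] by (smt (verit))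
qed

theorem slope_bound_canonical_effective:
  assumes e0: "e0 \<in> edges G" and nonneg: "\<forall>v\<in>verts G. 0 \<le> div_plus_canon G \<sigma> v"
    and K: "\<forall>v\<in>verts G. 0 \<le> div_plus_canon G (\<lambda>_. 0) v"
  shows "\<bar>\<sigma> e0\<bar> \<le> 2 * genus G - 2"
proof (cases "\<sigma> e0 = 0")
  case True
  then show ?thesis using genus_ge_one[OF metric_graph nonneg] by simp
next
  case False
  let ?B = "sublevel e0"
  have "\<bar>\<sigma> e0\<bar> \<le> 2 * (int (card (inner_edges G ?B)) - int (card ?B) + (\<Sum>v\<in>?B. int (wt G v))) + 1"
    using slope_bound_sublevel[OF e0 False] nonneg sublevel_subset by blast
  moreover have "int (card (verts G - ?B)) + 1 \<le> int (card (edges G - inner_edges G ?B)) + (\<Sum>v\<in>verts G - ?B. int (wt G v))"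
    using card_diff_bound_by_canonical[OF metric_graph e0 sublevel_crossing[OF e0 False]] K by blast
  ultimately show ?thesis
    using genus_split[OF metric_graph sublevel_subset, of e0] by (smt (verit))
qed

end

lemma rtranclp_adj_sym: "(adj G)\<^sup>*\<^sup>* x y \<Longrightarrow> (adj G)\<^sup>*\<^sup>* y x"
  by (rule sympD[OF symp_rtranclp]) (auto simp: adj_def symp_def)

definition edge_point :: "('v, 'e) wmgraph \<Rightarrow> 'e \<Rightarrow> real \<Rightarrow> ('v, 'e) point" where
  "edge_point G e t = (if t = 0 then Vert (src G e) else if t = len G e then Vert (tgt G e) else EPt e t)"

lemma on_edge_eq_edge_point: "on_edge G F e t = F (edge_point G e t)"
  unfolding on_edge_def edge_point_def by simp

locale breakpoints =
  fixes G :: "('v, 'e) wmgraph" and N :: "'e \<Rightarrow> nat" and a :: "'e \<Rightarrow> nat \<Rightarrow> real"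
  assumes metric_graph: "metric_graph G"
    and a_0: "e \<in> edges G \<Longrightarrow> a e 0 = 0"
    and a_N: "e \<in> edges G \<Longrightarrow> a e (N e) = len G e"
    and a_Suc: "e \<in> edges G \<Longrightarrow> i < N e \<Longrightarrow> a e i < a e (Suc i)"
begin

lemma a_less:
  assumes "e \<in> edges G" "i < j" "j \<le> N e"
  shows "a e i < a e j"
  by (rule lift_Suc_mono_less_ivl[of "{..<N e}"]) (use a_Suc[OF assms(1)] assms in auto)

lemma a_eq_iff:
  assumes "e \<in> edges G" "i \<le> N e" "j \<le> N e"
  shows "a e i = a e j \<longleftrightarrow> i = j"
  using a_less[OF assms(1), of i j] a_less[OF assms(1), of j i] assms(2,3)
  by (cases i j rule: linorder_cases) auto

lemma N_pos: "e \<in> edges G \<Longrightarrow> 0 < N e"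
  using a_0 a_N metric_graphD(5)[OF metric_graph] by (metis gr0I less_irrefl)

lemma edge_point_a:
  assumes "e \<in> edges G" "k \<le> N e"
  shows "edge_point G e (a e k) =
    (if k = 0 then Vert (src G e) else if k = N e then Vert (tgt G e) else EPt e (a e k))"
  using a_eq_iff[OF assms, of 0] a_eq_iff[OF assms, of "N e"] a_0[OF assms(1)] a_N[OF assms(1)]
    N_pos[OF assms(1)] unfolding edge_point_def by auto

definition subdivision :: "(('v, 'e) point, 'e \<times> nat) wmgraph" where
  "subdivision = \<lparr>verts = Vert ` verts G \<union> (\<lambda>(e, j). EPt e (a e j)) ` (SIGMA e:edges G. {0<..<N e}),
     edges = (SIGMA e:edges G. {..<N e}),
     src = \<lambda>(e, i). edge_point G e (a e i),
     tgt = \<lambda>(e, i). edge_point G e (a e (Suc i)),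
     len = \<lambda>(e, i). a e (Suc i) - a e i,
     wt = weight G\<rparr>"

lemma subdivision_simps:
  "verts subdivision = Vert ` verts G \<union> (\<lambda>(e, j). EPt e (a e j)) ` (SIGMA e:edges G. {0<..<N e})"
  "edges subdivision = (SIGMA e:edges G. {..<N e})"
  "src subdivision (e, i) = edge_point G e (a e i)"
  "tgt subdivision (e, i) = edge_point G e (a e (Suc i))"
  "len subdivision (e, i) = a e (Suc i) - a e i"
  "wt subdivision = weight G"
  by (simp_all add: subdivision_def)

lemma edge_point_in_verts_subdivision:
  assumes "e \<in> edges G" "k \<le> N e"
  shows "edge_point G e (a e k) \<in> verts subdivision"
  using edge_point_a[OF assms] assms metric_graphD(3,4)[OF metric_graph assms(1)]
  unfolding subdivision_simps by force

lemma verts_subdivision_subset_points: "verts subdivision \<subseteq> points G"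
proof -
  have "0 < a e j \<and> a e j < len G e" if "e \<in> edges G" "0 < j" "j < N e" for e j
    using a_less[OF that(1) that(2)] a_less[OF that(1) that(3)] a_0 a_N that by auto
  then show ?thesis
    unfolding points_def subdivision_simps by force
qed

lemma src_subdivision_eq_Vert:
  assumes "e \<in> edges G" "i < N e"
  shows "src subdivision (e, i) = Vert v \<longleftrightarrow> i = 0 \<and> src G e = v"
  using edge_point_a[OF assms(1), of i] assms unfolding subdivision_simps by auto

lemma tgt_subdivision_eq_Vert:
  assumes "e \<in> edges G" "i < N e"
  shows "tgt subdivision (e, i) = Vert v \<longleftrightarrow> Suc i = N e \<and> tgt G e = v"
  using edge_point_a[OF assms(1), of "Suc i"] assms unfolding subdivision_simps by auto

lemma src_subdivision_eq_EPt:
  assumes "e \<in> edges G" "i < N e" "0 < j" "j < N e'"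
  shows "src subdivision (e, i) = EPt e' (a e' j) \<longleftrightarrow> e = e' \<and> i = j"
  using edge_point_a[OF assms(1), of i] a_eq_iff[OF assms(1), of i j] assms
  unfolding subdivision_simps by auto

lemma tgt_subdivision_eq_EPt:
  assumes "e \<in> edges G" "i < N e" "0 < j" "j < N e'"
  shows "tgt subdivision (e, i) = EPt e' (a e' j) \<longleftrightarrow> e = e' \<and> Suc i = j"
  using edge_point_a[OF assms(1), of "Suc i"] a_eq_iff[OF assms(1), of "Suc i" j] assms
  unfolding subdivision_simps by auto

lemma darts_subdivision_Vert:
  "darts subdivision (Vert v) =
    (\<lambda>e. ((e, 0), True)) ` {e \<in> edges G. src G e = v} \<union> (\<lambda>e. ((e, N e - 1), False)) ` {e \<in> edges G. tgt G e = v}"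
proof (rule set_eqI, rule iffI)
  fix x assume "x \<in> darts subdivision (Vert v)"
  then consider (out) e i where "x = ((e, i), True)" "e \<in> edges G" "i < N e" "src subdivision (e, i) = Vert v"
    | (inc) e i where "x = ((e, i), False)" "e \<in> edges G" "i < N e" "tgt subdivision (e, i) = Vert v"
    unfolding darts_def subdivision_simps(2) by auto
  then show "x \<in> (\<lambda>e. ((e, 0), True)) ` {e \<in> edges G. src G e = v} \<union> (\<lambda>e. ((e, N e - 1), False)) ` {e \<in> edges G. tgt G e = v}"
  proof cases
    case (out e i)
    then show ?thesis using src_subdivision_eq_Vert[OF out(2,3)] by auto
  next
    case (inc e i)
    then show ?thesis using tgt_subdivision_eq_Vert[OF inc(2,3)] by force
  qed
next
  fix x assume "x \<in> (\<lambda>e. ((e, 0), True)) ` {e \<in> edges G. src G e = v} \<union> (\<lambda>e. ((e, N e - 1), False)) ` {e \<in> edges G. tgt G e = v}"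
  then obtain e where e: "e \<in> edges G" "x = ((e, 0), True) \<and> src G e = v \<or> x = ((e, N e - 1), False) \<and> tgt G e = v"
    by auto
  have "0 < N e" "N e - 1 < N e" "Suc (N e - 1) = N e"
    using N_pos[OF e(1)] by auto
  then show "x \<in> darts subdivision (Vert v)"
    using e src_subdivision_eq_Vert[OF e(1), of 0 v] tgt_subdivision_eq_Vert[OF e(1), of "N e - 1" v]
    unfolding darts_def subdivision_simps(2) by auto
qed

lemma darts_subdivision_EPt:
  assumes e: "e \<in> edges G" and j: "0 < j" "j < N e"
  shows "darts subdivision (EPt e (a e j)) = {((e, j), True), ((e, j - 1), False)}"
proof (rule set_eqI, rule iffI)
  fix x assume "x \<in> darts subdivision (EPt e (a e j))"
  then consider (out) e' i where "x = ((e', i), True)" "e' \<in> edges G" "i < N e'" "src subdivision (e', i) = EPt e (a e j)"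
    | (inc) e' i where "x = ((e', i), False)" "e' \<in> edges G" "i < N e'" "tgt subdivision (e', i) = EPt e (a e j)"
    unfolding darts_def subdivision_simps(2) by auto
  then show "x \<in> {((e, j), True), ((e, j - 1), False)}"
  proof cases
    case (out e' i)
    then show ?thesis using src_subdivision_eq_EPt[OF out(2,3) j] by auto
  next
    case (inc e' i)
    then show ?thesis using tgt_subdivision_eq_EPt[OF inc(2,3) j] by auto
  qed
next
  fix x assume "x \<in> {((e, j), True), ((e, j - 1), False)}"
  moreover have "src subdivision (e, j) = EPt e (a e j)" "tgt subdivision (e, j - 1) = EPt e (a e j)"
    using src_subdivision_eq_EPt[OF e j(2) j] tgt_subdivision_eq_EPt[OF e _ j, of "j - 1"] j by auto
  ultimately show "x \<in> darts subdivision (EPt e (a e j))"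
    using e j unfolding darts_def subdivision_simps(2) by auto
qed

lemma tdirs_bij_darts_subdivision:
  assumes "u \<in> verts subdivision"
  obtains h where "bij_betw h (tdirs G u) (darts subdivision u)"
    and "\<And>e b. (e, b) \<in> tdirs G u \<Longrightarrow>
      \<exists>i<N e. h (e, b) = ((e, i), b) \<and> param G u (e, b) = (if b then a e i else a e (Suc i))"
proof -
  consider (vert) v where "u = Vert v" | (interior) e j where "u = EPt e (a e j)" "e \<in> edges G" "0 < j" "j < N e"
    using assms unfolding subdivision_simps by auto
  then show ?thesis
  proof cases
    case vert
    define h where "h d = ((fst d, if snd d then 0 else N (fst d) - 1), snd d)" for d :: "'e \<times> bool"
    have "bij_betw h (tdirs G u) (darts subdivision u)"
    proof (rule bij_betw_imageI)
      show "inj_on h (tdirs G u)"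
        unfolding h_def inj_on_def by auto
      show "h ` tdirs G u = darts subdivision u"
        unfolding vert darts_subdivision_Vert tdirs_def h_def by force
    qed
    moreover have "\<exists>i<N e. h (e, b) = ((e, i), b) \<and> param G u (e, b) = (if b then a e i else a e (Suc i))"
      if "(e, b) \<in> tdirs G u" for e b
    proof -
      have e: "e \<in> edges G"
        using that unfolding vert tdirs_def by auto
      show ?thesis
        using N_pos[OF e] a_0[OF e] a_N[OF e] unfolding h_def vert param_def
        by (intro exI[of _ "if b then 0 else N e - 1"]) auto
    qed
    ultimately show ?thesis
      using that by blast
  next
    case interior
    define h where "h d = ((fst d, if snd d then j else j - 1), snd d)" for d :: "'e \<times> bool"
    have "bij_betw h (tdirs G u) (darts subdivision u)"
      unfolding interior(1) darts_subdivision_EPt[OF interior(2-4)] tdirs_def h_def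
      by (auto simp: bij_betw_def)
    moreover have "\<exists>i<N e'. h (e', b) = ((e', i), b) \<and> param G u (e', b) = (if b then a e' i else a e' (Suc i))"
      if "(e', b) \<in> tdirs G u" for e' b
      using that interior unfolding h_def tdirs_def param_def
      by (intro exI[of _ "if b then j else j - 1"]) auto
    ultimately show ?thesis
      using that by blast
  qed
qed

lemma canon_eq_div_plus_canon_subdivision:
  assumes "u \<in> verts subdivision"
  shows "canon G u = div_plus_canon subdivision (\<lambda>_. 0) u"
proof -
  obtain h where "bij_betw h (tdirs G u) (darts subdivision u)"
    using tdirs_bij_darts_subdivision[OF assms] by blast
  then have "card (tdirs G u) = card (darts subdivision u)"
    by (rule bij_betw_same_card)
  then show ?thesis
    unfolding canon_def valency_def div_plus_canon_def subdivision_simps(6) by (simp add: dart_slope_def cong: if_cong)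
qed

lemma canon_subdivision_nonneg:
  assumes "\<forall>x\<in>points G. 0 \<le> canon G x"
  shows "\<forall>u\<in>verts subdivision. 0 \<le> div_plus_canon subdivision (\<lambda>_. 0) u"
  using assms verts_subdivision_subset_points canon_eq_div_plus_canon_subdivision by force

lemma adj_subdivision_piece:
  assumes "e \<in> edges G" "i < N e"
  shows "adj subdivision (edge_point G e (a e i)) (edge_point G e (a e (Suc i)))"
  unfolding adj_def by (rule bexI[of _ "(e, i)"]) (simp_all add: subdivision_simps assms)

lemma rtranclp_adj_subdivision_along_edge:
  assumes "e \<in> edges G" "j \<le> N e"
  shows "(adj subdivision)\<^sup>*\<^sup>* (Vert (src G e)) (edge_point G e (a e j))"
  using assms(2)
proof (induction j)
  case 0
  then show ?case
    using edge_point_a[OF assms(1), of 0] by simp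
next
  case (Suc j)
  then have "(adj subdivision)\<^sup>*\<^sup>* (Vert (src G e)) (edge_point G e (a e j))"
    by simp
  moreover have "adj subdivision (edge_point G e (a e j)) (edge_point G e (a e (Suc j)))"
    using adj_subdivision_piece[OF assms(1)] Suc.prems by simp
  ultimately show ?case
    by (rule rtranclp.rtrancl_into_rtrancl)
qed

lemma rtranclp_adj_subdivision_Vert:
  assumes "(adj G)\<^sup>*\<^sup>* x y"
  shows "(adj subdivision)\<^sup>*\<^sup>* (Vert x) (Vert y)"
  using assms
proof (induction rule: rtranclp_induct)
  case base
  then show ?case by simp
next
  case (step y z)
  obtain e where e: "e \<in> edges G" "(src G e = y \<and> tgt G e = z) \<or> (src G e = z \<and> tgt G e = y)"
    using step(2) unfolding adj_def by blast
  have forth: "(adj subdivision)\<^sup>*\<^sup>* (Vert (src G e)) (Vert (tgt G e))"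
    using rtranclp_adj_subdivision_along_edge[OF e(1) order.refl] edge_point_a[OF e(1) order.refl] N_pos[OF e(1)]
    by simp
  then have "(adj subdivision)\<^sup>*\<^sup>* (Vert y) (Vert z)"
    using e(2) rtranclp_adj_sym[OF forth] by auto
  with step.IH show ?case
    by (rule rtranclp_trans)
qed

lemma subdivision_vertex_reachable:
  assumes "u \<in> verts subdivision"
  obtains v where "v \<in> verts G" "(adj subdivision)\<^sup>*\<^sup>* (Vert v) u"
proof -
  consider (vert) v where "v \<in> verts G" "u = Vert v"
    | (interior) e j where "u = EPt e (a e j)" "e \<in> edges G" "0 < j" "j < N e"
    using assms unfolding subdivision_simps by auto
  then show ?thesis
  proof cases
    case vert
    then show ?thesis using that by blast
  next
    case interior
    then have "(adj subdivision)\<^sup>*\<^sup>* (Vert (src G e)) u"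
      using rtranclp_adj_subdivision_along_edge[of e j] edge_point_a[of e j] by simp
    then show ?thesis
      using that metric_graphD(3)[OF metric_graph interior(2)] by blast
  qed
qed

lemma metric_graph_subdivision: "metric_graph subdivision"
proof -
  have "finite (verts subdivision)" "finite (edges subdivision)"
    using metric_graphD(1,2)[OF metric_graph] by (auto simp: subdivision_simps)
  moreover have "verts subdivision \<noteq> {}"
    using metric_graphD(6)[OF metric_graph] unfolding subdivision_simps by auto
  moreover have "src subdivision q \<in> verts subdivision \<and> tgt subdivision q \<in> verts subdivision \<and> 0 < len subdivision q"
    if q_edge: "q \<in> edges subdivision" for q
  proof -
    obtain e i where q: "q = (e, i)" "e \<in> edges G" "i < N e"
      using q_edge by (cases q) (auto simp: subdivision_simps)
    then show ?thesis
      using edge_point_in_verts_subdivision[OF q(2), of i] edge_point_in_verts_subdivision[OF q(2), of "Suc i"]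
        a_Suc[OF q(2,3)] by (simp add: subdivision_simps)
  qed
  moreover have "(adj subdivision)\<^sup>*\<^sup>* u w" if u: "u \<in> verts subdivision" and w: "w \<in> verts subdivision" for u w
  proof -
    obtain v where v: "v \<in> verts G" "(adj subdivision)\<^sup>*\<^sup>* (Vert v) u"
      using subdivision_vertex_reachable[OF u] by blast
    obtain v' where v': "v' \<in> verts G" "(adj subdivision)\<^sup>*\<^sup>* (Vert v') w"
      using subdivision_vertex_reachable[OF w] by blast
    have "(adj subdivision)\<^sup>*\<^sup>* u (Vert v)"
      using rtranclp_adj_sym[OF v(2)] .
    also have "(adj subdivision)\<^sup>*\<^sup>* (Vert v) (Vert v')"
      using rtranclp_adj_subdivision_Vert metric_graphD(7)[OF metric_graph v(1) v'(1)] .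
    also note v'(2)
    finally show ?thesis .
  qed
  ultimately show ?thesis
    unfolding metric_graph_def by blast
qed

lemma genus_subdivision: "genus subdivision = genus G"
proof -
  define P where "P = (SIGMA e:edges G. {0<..<N e})"
  have fin: "finite (verts G)" "finite P"
    using metric_graphD(1,2)[OF metric_graph] unfolding P_def by auto
  have inj: "inj_on (\<lambda>(e, j). EPt e (a e j)) P"
    unfolding inj_on_def P_def using a_eq_iff by auto
  have disj: "Vert ` verts G \<inter> (\<lambda>(e, j). EPt e (a e j)) ` P = {}"
    by auto
  have "card (verts subdivision) = card (verts G) + card P"
    unfolding subdivision_simps(1) P_def[symmetric]
    using fin disj card_image[OF inj] by (simp add: card_Un_disjoint card_image inj_on_def)
  moreover have "int (card P) = (\<Sum>e\<in>edges G. int (N e) - 1)"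
    using metric_graphD(2)[OF metric_graph] N_pos unfolding P_def by (simp add: Suc_leI)
  moreover have "card (edges subdivision) = (\<Sum>e\<in>edges G. N e)"
    using metric_graphD(2)[OF metric_graph] by (simp add: subdivision_simps)
  moreover have "(\<Sum>u\<in>verts subdivision. wt subdivision u) = (\<Sum>v\<in>verts G. wt G v)"
  proof -
    have "(\<Sum>u\<in>(\<lambda>(e, j). EPt e (a e j)) ` P. weight G u) = 0"
      by (rule sum.neutral) (auto simp: weight_def)
    moreover have "(\<Sum>u\<in>Vert ` verts G. weight G u) = (\<Sum>v\<in>verts G. wt G v)"
      by (simp add: sum.reindex inj_on_def weight_def)
    ultimately show ?thesis
      unfolding subdivision_simps(1,6) P_def[symmetric] using fin disj by (simp add: sum.union_disjoint)
  qed
  ultimately show ?thesis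
    unfolding genus_def by (simp add: sum_subtractf)
qed

end

lemma rslope_affine:
  assumes "0 < \<delta>" and affine: "\<forall>s\<in>{t..t+\<delta>}. f s = m * s + c"
  shows "rslope f t = m"
  unfolding rslope_def
proof (rule the_equality)
  show "\<exists>\<epsilon>>0. \<forall>s\<in>{t..t+\<epsilon>}. f s = f t + m * (s - t)"
    using assms by (intro exI[of _ \<delta>]) (auto simp: algebra_simps)
next
  fix m' assume "\<exists>\<epsilon>>0. \<forall>s\<in>{t..t+\<epsilon>}. f s = f t + m' * (s - t)"
  then obtain \<epsilon> where \<epsilon>: "0 < \<epsilon>" "\<forall>s\<in>{t..t+\<epsilon>}. f s = f t + m' * (s - t)"
    by blast
  define s where "s = t + min \<epsilon> \<delta>"
  have s: "s \<in> {t..t+\<delta>}" "s \<in> {t..t+\<epsilon>}" "s \<noteq> t"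
    unfolding s_def using assms(1) \<epsilon>(1) by auto
  have "f s = f t + m' * (s - t)"
    using \<epsilon>(2) s(2) by blast
  moreover have "f s = m * s + c" "f t = m * t + c"
    using affine s(1) assms(1) by auto
  ultimately have "m' * (s - t) = m * (s - t)"
    unfolding right_diff_distrib by linarith
  then show "m' = m"
    using \<open>s \<noteq> t\<close> by simp
qed

lemma lslope_affine:
  assumes "0 < \<delta>" and affine: "\<forall>s\<in>{t-\<delta>..t}. f s = m * s + c"
  shows "lslope f t = m"
  unfolding lslope_def
proof (rule the_equality)
  show "\<exists>\<epsilon>>0. \<forall>s\<in>{t-\<epsilon>..t}. f s = f t + m * (s - t)"
    using assms by (intro exI[of _ \<delta>]) (auto simp: algebra_simps)
next
  fix m' assume "\<exists>\<epsilon>>0. \<forall>s\<in>{t-\<epsilon>..t}. f s = f t + m' * (s - t)"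
  then obtain \<epsilon> where \<epsilon>: "0 < \<epsilon>" "\<forall>s\<in>{t-\<epsilon>..t}. f s = f t + m' * (s - t)"
    by blast
  define s where "s = t - min \<epsilon> \<delta>"
  have s: "s \<in> {t-\<delta>..t}" "s \<in> {t-\<epsilon>..t}" "s \<noteq> t"
    unfolding s_def using assms(1) \<epsilon>(1) by auto
  have "f s = f t + m' * (s - t)"
    using \<epsilon>(2) s(2) by blast
  moreover have "f s = m * s + c" "f t = m * t + c"
    using affine s(1) assms(1) by auto
  ultimately have "m' * (s - t) = m * (s - t)"
    unfolding right_diff_distrib by linarith
  then show "m' = m"
    using \<open>s \<noteq> t\<close> by simp
qed

lemma interval_containing_right:
  fixes a :: "nat \<Rightarrow> real"
  assumes "\<forall>i<n. a i < a (Suc i)" "a 0 \<le> x" "x < a n"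
  shows "\<exists>i<n. a i \<le> x \<and> x < a (Suc i)"
  using assms
proof (induction n)
  case (Suc n)
  then show ?case
    by (cases "x < a n") (auto intro: less_SucI)
qed simp

lemma interval_containing_left:
  fixes a :: "nat \<Rightarrow> real"
  assumes "\<forall>i<n. a i < a (Suc i)" "a 0 < x" "x \<le> a n"
  shows "\<exists>i<n. a i < x \<and> x \<le> a (Suc i)"
  using assms
proof (induction n)
  case (Suc n)
  then show ?case
    by (cases "x \<le> a n") (auto intro: less_SucI)
qed simp

lemma tdirs_edges: "x \<in> points G \<Longrightarrow> (e, b) \<in> tdirs G x \<Longrightarrow> e \<in> edges G"
  unfolding points_def tdirs_def by auto

lemma param_range:
  assumes "metric_graph G" "x \<in> points G" "(e, b) \<in> tdirs G x"
  shows "if b then 0 \<le> param G x (e, b) \<and> param G x (e, b) < len G e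
         else 0 < param G x (e, b) \<and> param G x (e, b) \<le> len G e"
  using assms metric_graphD(5)[OF assms(1) tdirs_edges[OF assms(2,3)]]
  unfolding points_def tdirs_def param_def by auto

locale piecewise_affine = breakpoints G N a for G :: "('v, 'e) wmgraph" and N a +
  fixes F :: "('v, 'e) point \<Rightarrow> real" and M :: "'e \<times> nat \<Rightarrow> int"
  assumes affine_on_piece: "e \<in> edges G \<Longrightarrow> i < N e \<Longrightarrow>
    \<exists>c. \<forall>t\<in>{a e i..a e (Suc i)}. on_edge G F e t = of_int (M (e, i)) * t + c"
begin

lemma dslope_on_piece:
  assumes "e \<in> edges G" "i < N e"
    and "if b then a e i \<le> param G x (e, b) \<and> param G x (e, b) < a e (Suc i)
         else a e i < param G x (e, b) \<and> param G x (e, b) \<le> a e (Suc i)"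
  shows "dslope G F x (e, b) = of_int (dart_slope M ((e, i), b))"
proof -
  obtain c where c: "\<forall>t\<in>{a e i..a e (Suc i)}. on_edge G F e t = of_int (M (e, i)) * t + c"
    using affine_on_piece[OF assms(1,2)] by blast
  show ?thesis
  proof (cases b)
    case True
    then have "rslope (on_edge G F e) (param G x (e, b)) = of_int (M (e, i))"
      using assms(3) c by (intro rslope_affine[where \<delta> = "a e (Suc i) - param G x (e, b)" and c = c]) auto
    then show ?thesis
      using True unfolding dslope_def by simp
  next
    case False
    then have "lslope (on_edge G F e) (param G x (e, b)) = of_int (M (e, i))"
      using assms(3) c by (intro lslope_affine[where \<delta> = "param G x (e, b) - a e i" and c = c]) auto
    then show ?thesis
      using False unfolding dslope_def by simp
  qed
qed

lemma dslope_eq_piece_slope: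
  assumes "x \<in> points G" "(e, b) \<in> tdirs G x"
  shows "\<exists>i<N e. dslope G F x (e, b) = of_int (dart_slope M ((e, i), b))"
proof -
  have e: "e \<in> edges G"
    using tdirs_edges[OF assms] .
  have "\<exists>i<N e. if b then a e i \<le> param G x (e, b) \<and> param G x (e, b) < a e (Suc i)
      else a e i < param G x (e, b) \<and> param G x (e, b) \<le> a e (Suc i)"
    using param_range[OF metric_graph assms] a_0[OF e] a_N[OF e] a_Suc[OF e]
      interval_containing_right[of "N e" "a e"] interval_containing_left[of "N e" "a e"]
    by (cases b) auto
  then show ?thesis
    using dslope_on_piece[OF e] by blast
qed

lemma ord_plus_canon_subdivision:
  assumes "u \<in> verts subdivision"
  shows "ord G F u + of_int (canon G u) = of_int (div_plus_canon subdivision M u)"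
proof -
  obtain h where h: "bij_betw h (tdirs G u) (darts subdivision u)"
    and piece: "\<And>e b. (e, b) \<in> tdirs G u \<Longrightarrow>
      \<exists>i<N e. h (e, b) = ((e, i), b) \<and> param G u (e, b) = (if b then a e i else a e (Suc i))"
    using tdirs_bij_darts_subdivision[OF assms] by blast
  have slope: "dslope G F u d = of_int (dart_slope M (h d))" if d_in: "d \<in> tdirs G u" for d
  proof -
    obtain e b where d: "d = (e, b)"
      by fastforce
    obtain i where i: "i < N e" "h (e, b) = ((e, i), b)" "param G u (e, b) = (if b then a e i else a e (Suc i))"
      using piece d_in unfolding d by blast
    have "u \<in> points G"
      using assms verts_subdivision_subset_points by blast
    then have e: "e \<in> edges G"
      using d_in unfolding d by (rule tdirs_edges)
    have "if b then a e i \<le> param G u (e, b) \<and> param G u (e, b) < a e (Suc i)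
        else a e i < param G u (e, b) \<and> param G u (e, b) \<le> a e (Suc i)"
      using i(3) a_Suc[OF e i(1)] by (cases b) simp_all
    then show ?thesis
      unfolding d i(2) by (rule dslope_on_piece[OF e i(1)])
  qed
  have "ord G F u + of_int (canon G u) = (\<Sum>d\<in>tdirs G u. 1 - dslope G F u d) + (2 * real (weight G u) - 2)"
    unfolding ord_def canon_def valency_def by (simp add: sum_subtractf)
  also have "(\<Sum>d\<in>tdirs G u. 1 - dslope G F u d) = (\<Sum>d\<in>tdirs G u. of_int (1 - dart_slope M (h d)))"
    using slope by (intro sum.cong) auto
  also have "\<dots> = of_int (\<Sum>d\<in>darts subdivision u. 1 - dart_slope M d)"
    unfolding of_int_sum by (rule sum.reindex_bij_betw[OF h])
  finally show ?thesis
    unfolding div_plus_canon_def subdivision_simps(6) by simp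
qed

lemma dslope_bounded_by_piece:
  assumes "x \<in> points G" "d \<in> tdirs G x"
  obtains q where "q \<in> edges subdivision" "\<bar>dslope G F x d\<bar> = of_int \<bar>M q\<bar>"
proof -
  obtain e b where d: "d = (e, b)"
    by fastforce
  obtain i where i: "i < N e" "dslope G F x (e, b) = of_int (dart_slope M ((e, i), b))"
    using dslope_eq_piece_slope assms unfolding d by blast
  have "(e, i) \<in> edges subdivision"
    using tdirs_edges assms i(1) unfolding d by (simp add: subdivision_simps)
  moreover have "\<bar>dslope G F x d\<bar> = of_int \<bar>M (e, i)\<bar>"
    using i(2) unfolding d dart_slope_def by simp
  ultimately show ?thesis
    using that by blast
qed

sublocale subdivision: edge_affine subdivision F M
proof
  show "metric_graph subdivision"
    by (rule metric_graph_subdivision)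
  fix q assume "q \<in> edges subdivision"
  then obtain e i where q: "q = (e, i)" "e \<in> edges G" "i < N e"
    by (cases q) (auto simp: subdivision_simps)
  obtain c where c: "\<forall>t\<in>{a e i..a e (Suc i)}. on_edge G F e t = of_int (M (e, i)) * t + c"
    using affine_on_piece[OF q(2,3)] by blast
  show "F (tgt subdivision q) - F (src subdivision q) = of_int (M q) * len subdivision q"
    using c a_Suc[OF q(2,3)] unfolding q subdivision_simps on_edge_eq_edge_point[symmetric]
    by (auto simp: algebra_simps)
qed

lemma div_plus_canon_subdivision_nonneg:
  assumes "\<forall>x\<in>points G. 0 \<le> ord G F x + of_int (canon G x)"
  shows "\<forall>u\<in>verts subdivision. 0 \<le> div_plus_canon subdivision M u"
  using assms verts_subdivision_subset_points ord_plus_canon_subdivision by force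

theorem dslope_bound:
  assumes "\<forall>x\<in>points G. 0 \<le> ord G F x + of_int (canon G x)" "x \<in> points G" "d \<in> tdirs G x"
  shows "\<bar>dslope G F x d\<bar> \<le> of_int (2 * genus G - 1)"
proof -
  obtain q where q: "q \<in> edges subdivision" "\<bar>dslope G F x d\<bar> = of_int \<bar>M q\<bar>"
    using dslope_bounded_by_piece[OF assms(2,3)] .
  show ?thesis
    using subdivision.slope_bound[OF q(1) div_plus_canon_subdivision_nonneg[OF assms(1)]] genus_subdivision
    by (simp add: q(2))
qed

theorem dslope_bound_canonical_effective:
  assumes "\<forall>x\<in>points G. 0 \<le> ord G F x + of_int (canon G x)" "\<forall>x\<in>points G. 0 \<le> canon G x"
    and "x \<in> points G" "d \<in> tdirs G x"
  shows "\<bar>dslope G F x d\<bar> \<le> of_int (2 * genus G - 2)"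
proof -
  obtain q where q: "q \<in> edges subdivision" "\<bar>dslope G F x d\<bar> = of_int \<bar>M q\<bar>"
    using dslope_bounded_by_piece[OF assms(3,4)] .
  show ?thesis
    using subdivision.slope_bound_canonical_effective[OF q(1) div_plus_canon_subdivision_nonneg[OF assms(1)]
        canon_subdivision_nonneg[OF assms(2)]] genus_subdivision
    by (simp add: q(2))
qed

end

lemma trop_mero_piecewise_affine:
  assumes "metric_graph G" "trop_mero G F"
  obtains N a M where "piecewise_affine G N a F M"
proof -
  define P where "P e n b \<longleftrightarrow> b 0 = 0 \<and> b n = len G e \<and> (\<forall>i<n. b i < b (Suc i)) \<and>
    (\<forall>i<n. \<exists>(m::int) c. \<forall>t\<in>{b i..b (Suc i)}. on_edge G F e t = of_int m * t + c)" for e n b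
  have "\<forall>e\<in>edges G. \<exists>n b. P e n b"
    using assms(2) unfolding trop_mero_def pw_affine_int_def P_def by blast
  then obtain N a where Na: "\<forall>e\<in>edges G. P e (N e) (a e)"
    by (metis bchoice)
  have "\<forall>q. \<exists>m::int. fst q \<in> edges G \<and> snd q < N (fst q) \<longrightarrow>
      (\<exists>c. \<forall>t\<in>{a (fst q) (snd q)..a (fst q) (Suc (snd q))}. on_edge G F (fst q) t = of_int m * t + c)"
    using Na unfolding P_def by blast
  then obtain M where "\<forall>q. fst q \<in> edges G \<and> snd q < N (fst q) \<longrightarrow>
      (\<exists>c. \<forall>t\<in>{a (fst q) (snd q)..a (fst q) (Suc (snd q))}. on_edge G F (fst q) t = of_int (M q) * t + c)"
    by (metis choice)
  then have "piecewise_affine G N a F M"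
    using assms(1) Na unfolding P_def by unfold_locales auto
  then show ?thesis
    using that by blast
qed

theorem lemma4p8:
  fixes G :: "('v, 'e) wmgraph" and F :: "('v, 'e) point \<Rightarrow> real"
  assumes "metric_graph G"
    and "trop_mero G F"
    and "\<forall>x\<in>points G. ord G F x + of_int (canon G x) \<ge> 0"
  shows "(\<forall>x\<in>points G. \<forall>d\<in>tdirs G x. \<bar>dslope G F x d\<bar> \<le> of_int (2 * genus G - 1))
       \<and> ((\<forall>x\<in>points G. canon G x \<ge> 0) \<longrightarrow>
          (\<forall>x\<in>points G. \<forall>d\<in>tdirs G x. \<bar>dslope G F x d\<bar> \<le> of_int (2 * genus G - 2)))"
proof -
  obtain N a M where "piecewise_affine G N a F M"
    using trop_mero_piecewise_affine[OF assms(1,2)] .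
  then interpret piecewise_affine G N a F M .
  show ?thesis
    using dslope_bound dslope_bound_canonical_effective assms(3) by blast
qed

end
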